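(* If $G$ is a connected graph of order at least $3$ that is not a path, then $\gamma_P(G)\le \frac{1}{2}F_c(G)$, and this bound is sharp (there exist such graphs attaining equality).
   Context: Forcing process: given a set of initially colored vertices, at each step a colored vertex with exactly one non-colored neighbor forces (colors) that neighbor. A set $S\subseteq V(G)$ is a forcing set if iterating this process from $S$ eventually colors all vertices; it is a connected forcing set if moreover the induced subgraph $G[S]$ is connected. $F_c(G)$ is the minimum cardinality of a connected forcing set of $G$. Power domination: for $S\subseteq V$ define $\mathcal{P}_G^0(S)=N[S]$ and $\mathcal{P}_G^{i+1}(S)=\bigcup\{N[v]: v\in \mathcal{P}_G^i(S),\ |N[v]\setminus \mathcal{P}_G^i(S)|\le 1\}$; these stabilize to $\mathcal{P}_G^\infty(S)$, and $S$ is power dominating if $\mathcal{P}_G^\infty(S)=V(G)$. $\gamma_P(G)$ is the minimum cardinality of a power dominating set. *)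

theory Defs
  imports Complex_Main
begin

definition graph :: "'a set \<Rightarrow> ('a \<Rightarrow> 'a \<Rightarrow> bool) \<Rightarrow> bool" where
  "graph V E \<longleftrightarrow> finite V \<and> (\<forall>u v. E u v \<longrightarrow> u \<in> V \<and> v \<in> V)
     \<and> (\<forall>u v. E u v \<longrightarrow> E v u) \<and> (\<forall>v. \<not> E v v)"

definition nbhd :: "'a set \<Rightarrow> ('a \<Rightarrow> 'a \<Rightarrow> bool) \<Rightarrow> 'a \<Rightarrow> 'a set" where
  "nbhd V E v = {u \<in> V. E v u}"

definition cnbhd :: "'a set \<Rightarrow> ('a \<Rightarrow> 'a \<Rightarrow> bool) \<Rightarrow> 'a \<Rightarrow> 'a set" where
  "cnbhd V E v = insert v (nbhd V E v)"

definition cnbhd_set :: "'a set \<Rightarrow> ('a \<Rightarrow> 'a \<Rightarrow> bool) \<Rightarrow> 'a set \<Rightarrow> 'a set" where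
  "cnbhd_set V E S = (\<Union>v\<in>S. cnbhd V E v)"

definition induced_connected :: "('a \<Rightarrow> 'a \<Rightarrow> bool) \<Rightarrow> 'a set \<Rightarrow> bool" where
  "induced_connected E S \<longleftrightarrow>
     (\<forall>u\<in>S. \<forall>v\<in>S. (\<lambda>x y. E x y \<and> x \<in> S \<and> y \<in> S)\<^sup>*\<^sup>* u v)"

definition connected_graph :: "'a set \<Rightarrow> ('a \<Rightarrow> 'a \<Rightarrow> bool) \<Rightarrow> bool" where
  "connected_graph V E \<longleftrightarrow> V \<noteq> {} \<and> induced_connected E V"

definition is_path_graph :: "'a set \<Rightarrow> ('a \<Rightarrow> 'a \<Rightarrow> bool) \<Rightarrow> bool" where
  "is_path_graph V E \<longleftrightarrow> (\<exists>xs. distinct xs \<and> set xs = V \<and>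
     (\<forall>u v. E u v \<longleftrightarrow> (\<exists>i. Suc i < length xs \<and>
        ((u = xs ! i \<and> v = xs ! Suc i) \<or> (v = xs ! i \<and> u = xs ! Suc i)))))"

text \<open>Final coloured set of the forcing process started from S: the least set
  containing S and closed under the colour change rule (a coloured vertex all of
  whose neighbours but w are coloured forces w).\<close>
inductive_set forced_closure :: "'a set \<Rightarrow> ('a \<Rightarrow> 'a \<Rightarrow> bool) \<Rightarrow> 'a set \<Rightarrow> 'a set"
  for V E S where
  base: "v \<in> S \<Longrightarrow> v \<in> forced_closure V E S"
| force: "\<lbrakk>v \<in> forced_closure V E S; w \<in> nbhd V E v;
           \<And>u. u \<in> nbhd V E v \<Longrightarrow> u \<noteq> w \<Longrightarrow> u \<in> forced_closure V E S\<rbrakk> \<Longrightarrow> w \<in> forced_closure V E S"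

definition forcing_set :: "'a set \<Rightarrow> ('a \<Rightarrow> 'a \<Rightarrow> bool) \<Rightarrow> 'a set \<Rightarrow> bool" where
  "forcing_set V E S \<longleftrightarrow> S \<subseteq> V \<and> forced_closure V E S = V"

definition connected_forcing_set :: "'a set \<Rightarrow> ('a \<Rightarrow> 'a \<Rightarrow> bool) \<Rightarrow> 'a set \<Rightarrow> bool" where
  "connected_forcing_set V E S \<longleftrightarrow> forcing_set V E S \<and> induced_connected E S"

definition Fc :: "'a set \<Rightarrow> ('a \<Rightarrow> 'a \<Rightarrow> bool) \<Rightarrow> nat" where
  "Fc V E = (LEAST k. \<exists>S. connected_forcing_set V E S \<and> card S = k)"

primrec pd_obs :: "'a set \<Rightarrow> ('a \<Rightarrow> 'a \<Rightarrow> bool) \<Rightarrow> 'a set \<Rightarrow> nat \<Rightarrow> 'a set" where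
  "pd_obs V E S 0 = cnbhd_set V E S"
| "pd_obs V E S (Suc i) =
     \<Union>{cnbhd V E v | v. v \<in> pd_obs V E S i \<and> card (cnbhd V E v - pd_obs V E S i) \<le> 1}"

definition pd_obs_inf :: "'a set \<Rightarrow> ('a \<Rightarrow> 'a \<Rightarrow> bool) \<Rightarrow> 'a set \<Rightarrow> 'a set" where
  "pd_obs_inf V E S = (\<Union>i. pd_obs V E S i)"

definition power_dominating :: "'a set \<Rightarrow> ('a \<Rightarrow> 'a \<Rightarrow> bool) \<Rightarrow> 'a set \<Rightarrow> bool" where
  "power_dominating V E S \<longleftrightarrow> S \<subseteq> V \<and> pd_obs_inf V E S = V"

definition gammaP :: "'a set \<Rightarrow> ('a \<Rightarrow> 'a \<Rightarrow> bool) \<Rightarrow> nat" where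
  "gammaP V E = (LEAST k. \<exists>S. power_dominating V E S \<and> card S = k)"

end

theory Submission
  imports Defs
begin

text \<open>A minimum connected forcing set S has at least two vertices, since a single vertex
  can only force along a path. Hence G[S] has no isolated vertex, and by Ore's theorem some
  D \<subseteq> S with |D| \<le> |S|/2 dominates S. Power domination from D observes N[D] \<supseteq> S in
  its first step and can then replay every force of the forcing process from S, so D is
  power dominating. For the triangle the bound is attained, as 1 \<le> gammaP \<le> Fc/2 \<le> 2/2.\<close>

section \<open>Forcing from a single vertex\<close>

lemma forced_closure_empty: "forced_closure V E {} = {}"
proof -
  have "x \<notin> forced_closure V E {}" for x
  proof
    assume "x \<in> forced_closure V E {}"
    then show False by (induction rule: forced_closure.induct) auto
  qed
  then show ?thesis by blast
qed

lemma forced_closure_subset: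
  assumes "S \<subseteq> V" shows "forced_closure V E S \<subseteq> V"
proof
  fix x assume "x \<in> forced_closure V E S"
  then show "x \<in> V"
  proof (induction rule: forced_closure.induct)
    case (base v)
    then show ?case using assms by blast
  next
    case (force v w)
    show ?case using force.hyps(2) by (simp add: nbhd_def)
  qed
qed

lemma forced_closure_self: "forced_closure V E V = V"
  using forced_closure_subset[of V V E] forced_closure.base[of _ V V E] by blast

text \<open>A forcing chain from v lists the vertices coloured so far, in forcing order, when
  the process starts from v alone: each vertex but the last has already forced its
  successor, so its neighbours are exactly its neighbours in the list.\<close>
definition forcing_chain :: "'a set \<Rightarrow> ('a \<Rightarrow> 'a \<Rightarrow> bool) \<Rightarrow> 'a \<Rightarrow> 'a list \<Rightarrow> bool" where
  "forcing_chain V E v xs \<longleftrightarrow> xs \<noteq> [] \<and> hd xs = v \<and> distinct xs \<and> set xs \<subseteq> V \<and>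
     (\<forall>i u. Suc i < length xs \<longrightarrow> (E (xs ! i) u \<longleftrightarrow> u = xs ! Suc i \<or> (0 < i \<and> u = xs ! (i - 1))))"

lemma forcing_chain_nbr_iff:
  "forcing_chain V E v xs \<Longrightarrow> Suc i < length xs \<Longrightarrow>
     E (xs ! i) u \<longleftrightarrow> u = xs ! Suc i \<or> (0 < i \<and> u = xs ! (i - 1))"
  unfolding forcing_chain_def by blast

lemma forcing_chain_edge_index:
  assumes ch: "forcing_chain V E v xs" and "k < j" "j < length xs" and e: "E (xs ! k) (xs ! j)"
  shows "j = Suc k"
proof -
  have dist: "distinct xs" using ch unfolding forcing_chain_def by blast
  have "xs ! j = xs ! Suc k \<or> (0 < k \<and> xs ! j = xs ! (k - 1))"
    using forcing_chain_nbr_iff[OF ch, of k] e \<open>k < j\<close> \<open>j < length xs\<close> by simp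
  then show ?thesis
    using nth_eq_iff_index_eq[OF dist] \<open>k < j\<close> \<open>j < length xs\<close> by fastforce
qed

lemma forcing_chain_snoc:
  assumes g: "graph V E" and ch: "forcing_chain V E v xs"
    and w: "w \<notin> set xs" "E (last xs) w"
    and others: "\<And>u. E (last xs) u \<Longrightarrow> u \<noteq> w \<Longrightarrow> u \<in> set xs"
  shows "forcing_chain V E v (xs @ [w])"
proof -
  have sym: "\<And>a b. E a b \<Longrightarrow> E b a" and irr: "\<And>a. \<not> E a a" and wV: "w \<in> V"
    using g w(2) unfolding graph_def by blast+
  have ne: "xs \<noteq> []" and dist: "distinct xs"
    using ch unfolding forcing_chain_def by blast+
  define l where "l = length xs - 1"
  have l: "l < length xs" "last xs = xs ! l" using ne by (simp_all add: l_def last_conv_nth)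
  have last_nbr: "E (xs ! l) u \<longleftrightarrow> u = w \<or> (0 < l \<and> u = xs ! (l - 1))" for u
  proof
    assume e: "E (xs ! l) u"
    show "u = w \<or> (0 < l \<and> u = xs ! (l - 1))"
    proof (cases "u = w")
      case False
      then obtain k where k: "k < length xs" "u = xs ! k"
        using others e l by (metis in_set_conv_nth)
      have "k \<noteq> l" using irr e k by blast
      then have "k < l" using k l_def by simp
      then have "l = Suc k"
        using forcing_chain_edge_index[OF ch _ l(1)] sym e k by blast
      then show ?thesis using k by simp
    qed simp
  next
    assume "u = w \<or> (0 < l \<and> u = xs ! (l - 1))"
    then show "E (xs ! l) u"
    proof
      assume u: "0 < l \<and> u = xs ! (l - 1)"
      then have "E (xs ! (l - 1)) (xs ! l)"
        using forcing_chain_nbr_iff[OF ch, of "l - 1" "xs ! l"] l(1) by simp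
      then show ?thesis using sym u by simp
    qed (use w l in simp)
  qed
  have "E ((xs @ [w]) ! i) u \<longleftrightarrow> u = (xs @ [w]) ! Suc i \<or> (0 < i \<and> u = (xs @ [w]) ! (i - 1))"
    if i: "Suc i < length (xs @ [w])" for i u
  proof (cases "i = l")
    case True
    then show ?thesis using last_nbr l by (simp add: nth_append l_def)
  next
    case False
    then have "Suc i < length xs" "i - 1 < length xs" using i l_def by simp_all
    then show ?thesis using forcing_chain_nbr_iff[OF ch] by (simp add: nth_append)
  qed
  then show ?thesis using ch w(1) wV unfolding forcing_chain_def by auto
qed

lemma forced_closure_singleton_subset_maximal_chain:
  assumes g: "graph V E" and ch: "forcing_chain V E v xs"
    and maximal: "\<And>ys. forcing_chain V E v ys \<Longrightarrow> length ys \<le> length xs"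
  shows "forced_closure V E {v} \<subseteq> set xs"
proof
  fix y assume "y \<in> forced_closure V E {v}"
  then show "y \<in> set xs"
  proof (induction rule: forced_closure.induct)
    case (base y)
    then show ?case using ch unfolding forcing_chain_def by auto
  next
    case (force x w)
    have e: "E x w" using force.hyps(2) by (simp add: nbhd_def)
    obtain i where i: "i < length xs" "x = xs ! i"
      using force.IH(1) by (metis in_set_conv_nth)
    show ?case
    proof (cases "Suc i < length xs")
      case True
      then show ?thesis
        using forcing_chain_nbr_iff[OF ch True, of w] e i by auto
    next
      case False
      then have "i = length xs - 1" "xs \<noteq> []" using i by auto
      then have x: "x = last xs" using i by (simp add: last_conv_nth)
      show ?thesis
      proof (rule ccontr)
        assume "w \<notin> set xs"
        moreover have "E (last xs) w" using e x by simp
        moreover have "u \<in> set xs" if "E (last xs) u" "u \<noteq> w" for u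
          using force.IH(2)[of u] that x g unfolding graph_def nbhd_def by blast
        ultimately have "forcing_chain V E v (xs @ [w])" by (rule forcing_chain_snoc[OF g ch])
        then show False using maximal by fastforce
      qed
    qed
  qed
qed

lemma forcing_chain_is_path_graph:
  assumes g: "graph V E" and ch: "forcing_chain V E v xs" and V: "set xs = V"
  shows "is_path_graph V E"
  unfolding is_path_graph_def
proof (intro exI[of _ xs] conjI allI)
  have sym: "\<And>a b. E a b \<Longrightarrow> E b a" and irr: "\<And>a. \<not> E a a"
    and inV: "\<And>a b. E a b \<Longrightarrow> a \<in> V \<and> b \<in> V"
    using g unfolding graph_def by blast+
  show "distinct xs" using ch unfolding forcing_chain_def by blast
  show "set xs = V" by (fact V)
  fix a b
  show "E a b \<longleftrightarrow> (\<exists>i. Suc i < length xs \<and>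
          (a = xs ! i \<and> b = xs ! Suc i \<or> b = xs ! i \<and> a = xs ! Suc i))"
  proof
    assume e: "E a b"
    obtain p q where pq: "p < length xs" "a = xs ! p" "q < length xs" "b = xs ! q"
      using inV[OF e] V by (metis in_set_conv_nth)
    have "p \<noteq> q" using irr e pq by blast
    then consider "p < q" | "q < p" by linarith
    then show "\<exists>i. Suc i < length xs \<and>
        (a = xs ! i \<and> b = xs ! Suc i \<or> b = xs ! i \<and> a = xs ! Suc i)"
    proof cases
      case 1
      then have "q = Suc p" using forcing_chain_edge_index[OF ch] e pq by blast
      then show ?thesis using pq by blast
    next
      case 2
      then have "p = Suc q" using forcing_chain_edge_index[OF ch] sym[OF e] pq by blast
      then show ?thesis using pq by blast
    qed
  next
    assume "\<exists>i. Suc i < length xs \<and>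
        (a = xs ! i \<and> b = xs ! Suc i \<or> b = xs ! i \<and> a = xs ! Suc i)"
    then show "E a b" using forcing_chain_nbr_iff[OF ch] sym by blast
  qed
qed

lemma singleton_forcing_imp_path_graph:
  assumes g: "graph V E" and f: "forced_closure V E {v} = V"
  shows "is_path_graph V E"
proof -
  have fin: "finite V" using g unfolding graph_def by blast
  have "v \<in> V" using f forced_closure.base[of v "{v}"] by blast
  then have start: "forcing_chain V E v [v]" unfolding forcing_chain_def by simp
  have "length ys < Suc (card V)" if "forcing_chain V E v ys" for ys
    using that card_mono[OF fin] distinct_card[of ys]
    unfolding forcing_chain_def by (metis le_imp_less_Suc)
  then obtain xs where ch: "forcing_chain V E v xs"
    and maximal: "\<And>ys. forcing_chain V E v ys \<Longrightarrow> length ys \<le> length xs"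
    using ex_has_greatest_nat[of "forcing_chain V E v" "[v]" length] start by blast
  have "set xs = V"
    using forced_closure_singleton_subset_maximal_chain[OF g ch maximal] f ch
    unfolding forcing_chain_def by blast
  then show ?thesis using forcing_chain_is_path_graph[OF g ch] by blast
qed

section \<open>Ore's bound on the domination number\<close>

text \<open>Ore: a minimum dominating set D has a dominating complement, because a vertex of D
  not dominated by S - D could be deleted from D; hence |D| \<le> |S - D|.\<close>
lemma ore_dominating_set:
  assumes fin: "finite S" and nbr: "\<And>x. x \<in> S \<Longrightarrow> \<exists>y\<in>S. E x y"
    and sym: "\<And>a b. E a b \<Longrightarrow> E b a" and irr: "\<And>a. \<not> E a a"
  shows "\<exists>D\<subseteq>S. (\<forall>x\<in>S. x \<in> D \<or> (\<exists>d\<in>D. E d x)) \<and> 2 * card D \<le> card S"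
proof -
  define dom where "dom D \<longleftrightarrow> D \<subseteq> S \<and> (\<forall>x\<in>S. x \<in> D \<or> (\<exists>d\<in>D. E d x))" for D
  obtain D where D: "dom D" and minimum: "\<And>D'. dom D' \<Longrightarrow> card D \<le> card D'"
    using ex_has_least_nat[of dom S card] unfolding dom_def by blast
  have DS: "D \<subseteq> S" using D unfolding dom_def by blast
  have "dom (S - D)"
    unfolding dom_def
  proof (intro conjI ballI)
    fix x assume x: "x \<in> S"
    show "x \<in> S - D \<or> (\<exists>d\<in>S - D. E d x)"
    proof (rule ccontr)
      assume undominated: "\<not> (x \<in> S - D \<or> (\<exists>d\<in>S - D. E d x))"
      have "dom (D - {x})"
        unfolding dom_def
      proof (intro conjI ballI)
        fix y assume y: "y \<in> S"
        show "y \<in> D - {x} \<or> (\<exists>d\<in>D - {x}. E d y)"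
        proof (cases "y = x")
          case True
          obtain z where z: "z \<in> S" "E x z" using nbr x by blast
          then have "z \<in> D" using undominated sym by blast
          moreover have "z \<noteq> x" using z irr by blast
          ultimately show ?thesis using True sym[OF z(2)] by blast
        next
          case False
          show ?thesis
          proof (cases "y \<in> D")
            case True
            then show ?thesis using False by blast
          next
            case y_undominated: False
            then obtain d where "d \<in> D" "E d y" using D y unfolding dom_def by blast
            moreover have "d \<noteq> x" using \<open>E d y\<close> y y_undominated undominated sym by blast
            ultimately show ?thesis by blast
          qed
        qed
      qed (use DS in blast)
      then have "card D \<le> card (D - {x})" by (rule minimum)
      moreover have "x \<in> D" using x undominated by blast
      ultimately show False
        using card_Diff1_less[OF finite_subset[OF DS fin]] by fastforce
    qed
  qed blast
  then have "card D \<le> card (S - D)" by (rule minimum)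
  then have "2 * card D \<le> card S"
    using card_Diff_subset[OF finite_subset[OF DS fin] DS] card_mono[OF fin DS] by linarith
  then show ?thesis using D unfolding dom_def by blast
qed

section \<open>Power domination simulates forcing\<close>

lemma cnbhd_subset_pd_obs_Suc:
  "x \<in> pd_obs V E D i \<Longrightarrow> card (cnbhd V E x - pd_obs V E D i) \<le> 1 \<Longrightarrow>
     cnbhd V E x \<subseteq> pd_obs V E D (Suc i)"
  by (simp only: pd_obs.simps) blast

lemma self_in_cnbhd: "x \<in> cnbhd V E x"
  by (simp add: cnbhd_def)

lemma pd_obs_covered:
  assumes "y \<in> pd_obs V E D i"
  shows "\<exists>x \<in> pd_obs V E D i. y \<in> cnbhd V E x \<and> cnbhd V E x \<subseteq> pd_obs V E D i"
proof (cases i)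
  case 0
  obtain d where d: "d \<in> D" "y \<in> cnbhd V E d"
    using assms unfolding 0 pd_obs.simps cnbhd_set_def by blast
  have observed: "cnbhd V E d \<subseteq> pd_obs V E D 0"
    using d(1) unfolding pd_obs.simps cnbhd_set_def by blast
  then have "d \<in> pd_obs V E D 0" using self_in_cnbhd by fast
  then show ?thesis unfolding 0 using d(2) observed by blast
next
  case (Suc j)
  obtain x where x: "x \<in> pd_obs V E D j" "card (cnbhd V E x - pd_obs V E D j) \<le> 1"
    "y \<in> cnbhd V E x"
    using assms unfolding Suc by (simp only: pd_obs.simps) blast
  have observed: "cnbhd V E x \<subseteq> pd_obs V E D (Suc j)"
    using cnbhd_subset_pd_obs_Suc[OF x(1,2)] .
  then have "x \<in> pd_obs V E D (Suc j)" using self_in_cnbhd by fast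
  then show ?thesis unfolding Suc using x(3) observed by blast
qed

lemma pd_obs_Suc_mono: "pd_obs V E D i \<subseteq> pd_obs V E D (Suc i)"
proof
  fix y assume "y \<in> pd_obs V E D i"
  then have "\<exists>x \<in> pd_obs V E D i. y \<in> cnbhd V E x \<and> cnbhd V E x \<subseteq> pd_obs V E D i"
    by (rule pd_obs_covered)
  then obtain x where x: "x \<in> pd_obs V E D i" "y \<in> cnbhd V E x"
    and observed: "cnbhd V E x \<subseteq> pd_obs V E D i" by blast
  from observed have unobserved: "cnbhd V E x - pd_obs V E D i = {}" by blast
  have "card (cnbhd V E x - pd_obs V E D i) \<le> 1" unfolding unobserved by simp
  then have "cnbhd V E x \<subseteq> pd_obs V E D (Suc i)" by (rule cnbhd_subset_pd_obs_Suc[OF x(1)])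
  then show "y \<in> pd_obs V E D (Suc i)" using x(2) by blast
qed

lemma pd_obs_mono: "i \<le> j \<Longrightarrow> pd_obs V E D i \<subseteq> pd_obs V E D j"
  using lift_Suc_mono_le[of "pd_obs V E D", OF pd_obs_Suc_mono] .

lemma pd_obs_empty: "pd_obs V E {} i = {}"
  by (induction i) (auto simp: cnbhd_set_def)

lemma pd_obs_subset: "D \<subseteq> V \<Longrightarrow> pd_obs V E D i \<subseteq> V"
  by (induction i) (auto simp: cnbhd_set_def cnbhd_def nbhd_def)

lemma finite_subset_pd_obs:
  assumes "finite A" "A \<subseteq> pd_obs_inf V E D"
  obtains j where "A \<subseteq> pd_obs V E D j"
proof -
  obtain n where "A \<subseteq> (\<Union>i<n. pd_obs V E D i)"
    using finite_countable_subset assms unfolding pd_obs_inf_def by blast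
  moreover have "(\<Union>i<n. pd_obs V E D i) \<subseteq> pd_obs V E D n"
    by (intro UN_least pd_obs_mono) simp
  ultimately have "A \<subseteq> pd_obs V E D n" by blast
  then show ?thesis by (rule that)
qed

lemma forced_closure_subset_pd_obs_inf:
  assumes g: "graph V E" and S: "S \<subseteq> cnbhd_set V E D"
  shows "forced_closure V E S \<subseteq> pd_obs_inf V E D"
proof
  fix y assume "y \<in> forced_closure V E S"
  then show "y \<in> pd_obs_inf V E D"
  proof (induction rule: forced_closure.induct)
    case (base v)
    then have "v \<in> pd_obs V E D 0" using S by (simp only: pd_obs.simps) blast
    then show ?case unfolding pd_obs_inf_def by blast
  next
    case (force v w)
    txt \<open>All of N[v] except w is observed at some common stage j; then v propagates to w.\<close>
    let ?A = "insert v (nbhd V E v - {w})"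
    have "finite V" using g unfolding graph_def by blast
    then have "finite ?A" unfolding nbhd_def by simp
    moreover have "?A \<subseteq> pd_obs_inf V E D" using force.IH by blast
    ultimately obtain j where j: "?A \<subseteq> pd_obs V E D j" by (rule finite_subset_pd_obs)
    have "cnbhd V E v - pd_obs V E D j \<subseteq> {w}" using j unfolding cnbhd_def by blast
    then have "card (cnbhd V E v - pd_obs V E D j) \<le> 1"
      using card_mono[of "{w}"] by fastforce
    moreover have "v \<in> pd_obs V E D j" using j by blast
    ultimately have "cnbhd V E v \<subseteq> pd_obs V E D (Suc j)"
      by (intro cnbhd_subset_pd_obs_Suc)
    then show ?case using force.hyps(2) unfolding pd_obs_inf_def cnbhd_def by blast
  qed
qed

lemma power_dominating_if_dominates_forcing_set:
  assumes "graph V E" "D \<subseteq> V" "forcing_set V E S" "S \<subseteq> cnbhd_set V E D"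
  shows "power_dominating V E D"
  using assms forced_closure_subset_pd_obs_inf pd_obs_subset[of D V E]
  unfolding power_dominating_def forcing_set_def pd_obs_inf_def by blast

lemma power_dominating_self:
  assumes "graph V E" shows "power_dominating V E V"
proof (rule power_dominating_if_dominates_forcing_set)
  show "forcing_set V E V" by (simp add: forcing_set_def forced_closure_self)
  show "V \<subseteq> cnbhd_set V E V" by (auto simp: cnbhd_set_def cnbhd_def)
qed (use assms in simp_all)

lemma gammaP_le: "power_dominating V E D \<Longrightarrow> gammaP V E \<le> card D"
  unfolding gammaP_def by (rule Least_le) blast

lemma gammaP_pos:
  assumes g: "graph V E" and ne: "V \<noteq> {}"
  shows "0 < gammaP V E"
proof -
  have "\<exists>D. power_dominating V E D \<and> card D = gammaP V E"
    unfolding gammaP_def by (rule LeastI_ex) (use power_dominating_self[OF g] in blast)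
  then obtain D where D: "power_dominating V E D" "card D = gammaP V E" by blast
  have "finite V" using g unfolding graph_def by blast
  moreover have "D \<subseteq> V" using D(1) unfolding power_dominating_def by blast
  ultimately have "finite D" using finite_subset by blast
  moreover have "D \<noteq> {}"
  proof
    assume "D = {}"
    then have "V = {}" using D(1) unfolding power_dominating_def pd_obs_inf_def
      by (simp add: pd_obs_empty)
    then show False using ne by contradiction
  qed
  ultimately show ?thesis using D(2) card_gt_0_iff by metis
qed

lemma Fc_le: "connected_forcing_set V E S \<Longrightarrow> Fc V E \<le> card S"
  unfolding Fc_def by (rule Least_le) blast

lemma Fc_attained:
  assumes "connected_graph V E"
  obtains S where "connected_forcing_set V E S" "card S = Fc V E"
proof -
  have V: "connected_forcing_set V E V"
    using assms unfolding connected_forcing_set_def forcing_set_def connected_graph_def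
    by (simp add: forced_closure_self)
  have "\<exists>S. connected_forcing_set V E S \<and> card S = Fc V E"
    unfolding Fc_def by (rule LeastI_ex) (use V in blast)
  then show ?thesis using that by blast
qed

lemma induced_connected_nbr:
  assumes "induced_connected E S" "x \<in> S" "y \<in> S" "x \<noteq> y"
  shows "\<exists>z\<in>S. E x z"
proof -
  have "(\<lambda>a b. E a b \<and> a \<in> S \<and> b \<in> S)\<^sup>*\<^sup>* x y"
    using assms unfolding induced_connected_def by blast
  then show ?thesis using \<open>x \<noteq> y\<close> by (cases rule: converse_rtranclpE) auto
qed

lemma gammaP_le_half_Fc:
  assumes g: "graph V E" and c: "connected_graph V E" and n3: "card V \<ge> 3"
    and np: "\<not> is_path_graph V E"
  shows "real (gammaP V E) \<le> real (Fc V E) / 2"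
proof -
  have finV: "finite V" and sym: "\<And>a b. E a b \<Longrightarrow> E b a" and irr: "\<And>a. \<not> E a a"
    using g unfolding graph_def by blast+
  obtain S where S: "connected_forcing_set V E S" and cardS: "card S = Fc V E"
    using Fc_attained[OF c] .
  have SV: "S \<subseteq> V" and forcing: "forcing_set V E S" and conn: "induced_connected E S"
    using S unfolding connected_forcing_set_def forcing_set_def by blast+
  have finS: "finite S" using SV finV by (rule finite_subset)
  have "S \<noteq> {}"
  proof
    assume "S = {}"
    then have "V = {}" using forcing unfolding forcing_set_def by (simp add: forced_closure_empty)
    then show False using n3 by simp
  qed
  moreover have "\<not> (\<exists>v. S = {v})"
    using forcing np singleton_forcing_imp_path_graph[OF g] unfolding forcing_set_def by blast
  ultimately have two: "\<exists>y\<in>S. y \<noteq> x" if "x \<in> S" for x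
    using that by blast
  have nbr: "\<exists>y\<in>S. E x y" if "x \<in> S" for x
    using two[OF that] induced_connected_nbr[OF conn that] by metis
  obtain D where DS: "D \<subseteq> S" and dom: "\<forall>x\<in>S. x \<in> D \<or> (\<exists>d\<in>D. E d x)"
    and half: "2 * card D \<le> card S"
    using ore_dominating_set[of S E, OF finS nbr sym irr] by blast
  have "S \<subseteq> cnbhd_set V E D"
    using dom SV by (auto simp: cnbhd_set_def cnbhd_def nbhd_def)
  then have "power_dominating V E D"
    using power_dominating_if_dominates_forcing_set[OF g _ forcing] DS SV by blast
  then show ?thesis using gammaP_le[of V E D] half cardS by simp
qed

lemma path_graph_has_nonadjacent_pair:
  assumes "is_path_graph V E" "card V \<ge> 3"
  shows "\<exists>u\<in>V. \<exists>v\<in>V. u \<noteq> v \<and> \<not> E u v"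
proof -
  obtain xs where dist: "distinct xs" and V: "set xs = V" and edge: "\<And>u v. E u v \<longleftrightarrow>
      (\<exists>i. Suc i < length xs \<and> (u = xs ! i \<and> v = xs ! Suc i \<or> v = xs ! i \<and> u = xs ! Suc i))"
    using assms(1) unfolding is_path_graph_def by blast
  define l where "l = length xs - 1"
  have l: "l \<ge> 2" "l < length xs" using assms(2) distinct_card[OF dist] V l_def by simp_all
  have ends: "xs ! i = xs ! j \<longleftrightarrow> i = j" if "i \<le> l" "j \<le> l" for i j
    using nth_eq_iff_index_eq[OF dist] that l by simp
  have "\<not> E (xs ! 0) (xs ! l)"
  proof
    assume "E (xs ! 0) (xs ! l)"
    then obtain i where "Suc i < length xs" and
      i: "xs ! 0 = xs ! i \<and> xs ! l = xs ! Suc i \<or> xs ! l = xs ! i \<and> xs ! 0 = xs ! Suc i"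
      using edge by blast
    then have "Suc i \<le> l" using l_def by simp
    with i have "i = 0 \<and> l = Suc i \<or> l = i \<and> 0 = Suc i" using ends by simp
    then show False using \<open>l \<ge> 2\<close> by linarith
  qed
  moreover have "xs ! 0 \<noteq> xs ! l" using ends l by simp
  moreover have "0 < length xs" using l by linarith
  then have "xs ! 0 \<in> V" "xs ! l \<in> V" using V l nth_mem[of _ xs] by simp_all
  ultimately show ?thesis by blast
qed

definition complete_adj :: "'a set \<Rightarrow> 'a \<Rightarrow> 'a \<Rightarrow> bool" where
  "complete_adj V u v \<longleftrightarrow> u \<in> V \<and> v \<in> V \<and> u \<noteq> v"

lemma graph_complete_adj: "finite V \<Longrightarrow> graph V (complete_adj V)"
  unfolding graph_def complete_adj_def by blast

lemma induced_connected_complete_adj: "S \<subseteq> V \<Longrightarrow> induced_connected (complete_adj V) S"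
  unfolding induced_connected_def complete_adj_def
  by (metis (mono_tags, lifting) in_mono r_into_rtranclp rtranclp.rtrancl_refl)

lemma complete_graph_not_path: "card V \<ge> 3 \<Longrightarrow> \<not> is_path_graph V (complete_adj V)"
  using path_graph_has_nonadjacent_pair unfolding complete_adj_def by blast

lemma Fc_complete_graph_le:
  assumes w: "w \<in> V" and v: "v \<in> V" "v \<noteq> w"
  shows "Fc V (complete_adj V) \<le> card V - 1"
proof -
  let ?S = "V - {w}"
  have "w \<in> forced_closure V (complete_adj V) ?S"
  proof (rule forced_closure.force)
    show "v \<in> forced_closure V (complete_adj V) ?S" using v by (blast intro: forced_closure.base)
    show "w \<in> nbhd V (complete_adj V) v" using v w by (simp add: nbhd_def complete_adj_def)
  next
    fix u assume "u \<in> nbhd V (complete_adj V) v" "u \<noteq> w"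
    then have "u \<in> ?S" by (simp add: nbhd_def)
    then show "u \<in> forced_closure V (complete_adj V) ?S" by (rule forced_closure.base)
  qed
  moreover have "?S \<subseteq> forced_closure V (complete_adj V) ?S"
    by (rule subsetI, rule forced_closure.base)
  moreover have "forced_closure V (complete_adj V) ?S \<subseteq> V"
    by (rule forced_closure_subset) blast
  ultimately have "forcing_set V (complete_adj V) ?S"
    unfolding forcing_set_def using w by blast
  moreover have "induced_connected (complete_adj V) ?S"
    by (rule induced_connected_complete_adj) blast
  ultimately have "connected_forcing_set V (complete_adj V) ?S"
    unfolding connected_forcing_set_def by blast
  then have "Fc V (complete_adj V) \<le> card ?S" by (rule Fc_le)
  then show ?thesis using card_Diff_singleton[OF w] by simp
qed

lemma gammaP_le_half_Fc_sharp:
  "\<exists>(V :: nat set) E. graph V E \<and> connected_graph V E \<and> card V \<ge> 3 \<and>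
     \<not> is_path_graph V E \<and> real (gammaP V E) = real (Fc V E) / 2"
proof -
  define V :: "nat set" where "V = {0, 1, 2}"
  have card: "card V = 3" by (simp add: V_def)
  have g: "graph V (complete_adj V)" by (simp add: V_def graph_complete_adj)
  have c: "connected_graph V (complete_adj V)"
    unfolding connected_graph_def V_def by (simp add: induced_connected_complete_adj)
  have np: "\<not> is_path_graph V (complete_adj V)" by (rule complete_graph_not_path) (simp add: card)
  have "0 < gammaP V (complete_adj V)" using gammaP_pos[OF g] by (simp add: V_def)
  moreover have "Fc V (complete_adj V) \<le> 2"
    using Fc_complete_graph_le[where V = V and w = 0 and v = 1] card by (simp add: V_def)
  moreover have "real (gammaP V (complete_adj V)) \<le> real (Fc V (complete_adj V)) / 2"
    using gammaP_le_half_Fc[OF g c _ np] card by simp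
  ultimately have "real (gammaP V (complete_adj V)) = real (Fc V (complete_adj V)) / 2"
    by linarith
  then show ?thesis using g c np card by fastforce
qed

theorem proposition2:
  shows "(\<forall>(V :: 'a set) E. graph V E \<and> connected_graph V E \<and> card V \<ge> 3 \<and>
            \<not> is_path_graph V E \<longrightarrow> real (gammaP V E) \<le> real (Fc V E) / 2)
       \<and> (\<exists>(V :: nat set) E. graph V E \<and> connected_graph V E \<and> card V \<ge> 3 \<and>
            \<not> is_path_graph V E \<and> real (gammaP V E) = real (Fc V E) / 2)"
  using gammaP_le_half_Fc gammaP_le_half_Fc_sharp by blast

end
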